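(* Let $\pi$ and $\tau$ be endhered patterns of the same size $p$ (identified with permutations of $\{1,\dots,p\}$). If $\pi=\operatorname{letw}(\tau)$ or $\pi=\operatorname{retw}(\tau)$, then for all integers $n,k,m$, $$a_{n,k,m}(\pi,\tau)=a_{n,k,m}(\tau,\pi).$$ In particular, $a_{n,k}(\pi)=a_{n,k}(\tau)$ for all $n,k$.
   Context: A matching of size $n$ is a set of $n$ arcs $(a,b)$ with $1\le a<b\le 2n$ such that each point of $\{1,\dots,2n\}$ belongs to exactly one arc; $a$ is the starting point and $b$ the ending point of the arc. An endhered pattern of size $p$ is a matching of size $p$ in which every starting point precedes every ending point, i.e. its starting points are $1,\dots,p$ and ending points $p+1,\dots,2p$; it is identified with the permutation $\pi=\pi_1\dots\pi_p$ where $\pi_t$ is the starting point of the arc whose ending point is $p+t$. A matching $\mu$ of size $n$ contains $\pi$ at position $(i+1,j+1)$ (integers $i\ge 0$, $j\ge i+p$) if for every $s=1,\dots,p$ the pair $(i+s,\,j+\pi^{-1}(s))$ is an arc of $\mu$, where $\pi^{-1}$ is the inverse permutation; i.e. the arcs starting at $i+1,\dots,i+p$ end exactly at $j+1,\dots,j+p$ and form the pattern $\pi$. The number of occurrences of $\pi$ in $\mu$ is the number of positions at which $\mu$ contains $\pi$. $a_{n,k}(\pi)$ is the number of matchings of size $n$ with exactly $k$ occurrences of $\pi$, and $a_{n,k,m}(\pi,\tau)$ is the number of matchings of size $n$ with exactly $k$ occurrences of $\pi$ and exactly $m$ occurrences of $\tau$. The left endhered twist $\operatorname{letw}$ (resp.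 right endhered twist $\operatorname{retw}$) transforms a matching by reversing every maximal run of consecutive positions that are all starting points (resp. all ending points): within a maximal run $[a,b]$ of starting (resp. ending) points, the arc that had its starting (resp. ending) point at $a+t$ gets it at $b-t$, other endpoints unchanged. Applied to an endhered pattern (viewed as a matching) these give again endhered patterns. *)

theory Defs
  imports Main
begin

definition is_matching :: "nat \<Rightarrow> (nat \<times> nat) set \<Rightarrow> bool" where
  "is_matching n M \<longleftrightarrow>
     (\<forall>(a,b)\<in>M. 1 \<le> a \<and> a < b \<and> b \<le> 2*n) \<and>
     (\<forall>x\<in>{1..2*n}. \<exists>!e\<in>M. fst e = x \<or> snd e = x)"

definition is_start :: "(nat \<times> nat) set \<Rightarrow> nat \<Rightarrow> bool" where
  "is_start M x \<longleftrightarrow> (\<exists>b. (x,b) \<in> M)"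

definition is_end :: "(nat \<times> nat) set \<Rightarrow> nat \<Rightarrow> bool" where
  "is_end M x \<longleftrightarrow> (\<exists>a. (a,x) \<in> M)"

definition run_of :: "(nat \<Rightarrow> bool) \<Rightarrow> nat \<Rightarrow> nat set" where
  "run_of P x = {y. \<forall>z\<in>{min x y..max x y}. P z}"

text \<open>Reversal of a position inside its maximal run [a,b]: a+t \<mapsto> b-t.\<close>
definition run_reflect :: "(nat \<Rightarrow> bool) \<Rightarrow> nat \<Rightarrow> nat" where
  "run_reflect P x = Min (run_of P x) + Max (run_of P x) - x"

definition letw :: "(nat \<times> nat) set \<Rightarrow> (nat \<times> nat) set" where
  "letw M = (\<lambda>(a,b). (run_reflect (is_start M) a, b)) ` M"

definition retw :: "(nat \<times> nat) set \<Rightarrow> (nat \<times> nat) set" where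
  "retw M = (\<lambda>(a,b). (a, run_reflect (is_end M) b)) ` M"

definition pattern_matching :: "nat \<Rightarrow> (nat \<Rightarrow> nat) \<Rightarrow> (nat \<times> nat) set" where
  "pattern_matching p \<pi> = {(\<pi> t, p + t) | t. t \<in> {1..p}}"

text \<open>M contains \<pi> at position (i+1,j+1).\<close>
definition contains_at :: "nat \<Rightarrow> (nat \<Rightarrow> nat) \<Rightarrow> (nat \<times> nat) set \<Rightarrow> nat \<Rightarrow> nat \<Rightarrow> bool" where
  "contains_at p \<pi> M i j \<longleftrightarrow> i + p \<le> j \<and>
     (\<forall>s\<in>{1..p}. (i + s, j + inv_into {1..p} \<pi> s) \<in> M)"

definition occurrences :: "nat \<Rightarrow> (nat \<Rightarrow> nat) \<Rightarrow> (nat \<times> nat) set \<Rightarrow> nat" where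
  "occurrences p \<pi> M = card {(i,j). contains_at p \<pi> M i j}"

definition a_nk :: "nat \<Rightarrow> (nat \<Rightarrow> nat) \<Rightarrow> nat \<Rightarrow> nat \<Rightarrow> nat" where
  "a_nk p \<pi> n k = card {M. is_matching n M \<and> occurrences p \<pi> M = k}"

definition a_nkm :: "nat \<Rightarrow> (nat \<Rightarrow> nat) \<Rightarrow> (nat \<Rightarrow> nat) \<Rightarrow> nat \<Rightarrow> nat \<Rightarrow> nat \<Rightarrow> nat" where
  "a_nkm p \<pi> \<tau> n k m = card {M. is_matching n M \<and> occurrences p \<pi> M = k \<and> occurrences p \<tau> M = m}"

end

theory Submission
  imports Defs
begin

(* An occurrence of a pattern of size p at (i, j) joins the block of starting points i+1..i+p to
   the block of ending points j+1..j+p. The first block lies inside one maximal run of starting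
   points, and letw reverses that run, so the block is carried onto another block in reverse order:
   an occurrence of sigma turns into an occurrence of letw(sigma), whose permutation is
   t |-> p + 1 - sigma t. This gives an injection between the occurrence sets of sigma in M and of
   letw(sigma) in letw M. Since letw is an involution on matchings of size n, the injections in
   both directions force equality, so letw exchanges the occurrence counts of tau and pi and is a
   bijection between the matchings counted by a_{n,k,m}(pi,tau) and by a_{n,k,m}(tau,pi).
   The argument for retw is the same with runs of ending points. *)

section \<open>Maximal runs and their reflection\<close>

lemma run_of_subset: "run_of P x \<subseteq> Collect P"
  by (auto simp: run_of_def)

lemma self_mem_run_of: "P x \<Longrightarrow> x \<in> run_of P x"
  by (auto simp: run_of_def)

lemma run_of_sym: "y \<in> run_of P x \<longleftrightarrow> x \<in> run_of P y"
  by (simp add: run_of_def min.commute max.commute)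

lemma run_of_trans:
  assumes "y \<in> run_of P x" "w \<in> run_of P y"
  shows "w \<in> run_of P x"
  unfolding run_of_def
proof safe
  fix z assume "z \<in> {min x w..max x w}"
  then have "z \<in> {min x y..max x y} \<or> z \<in> {min y w..max y w}"
    by (cases "x \<le> y"; cases "y \<le> w"; cases "x \<le> w") auto
  then show "P z" using assms unfolding run_of_def by blast
qed

lemma run_of_eq:
  assumes "y \<in> run_of P x"
  shows "run_of P y = run_of P x"
proof
  show "run_of P y \<subseteq> run_of P x" using run_of_trans[OF assms] by blast
  show "run_of P x \<subseteq> run_of P y" using run_of_trans[OF assms[unfolded run_of_sym]] by blast
qed

lemma run_of_convex:
  assumes "y \<in> run_of P x" "z \<in> run_of P x" "y \<le> w" "w \<le> z"
  shows "w \<in> run_of P x"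
  unfolding run_of_def
proof safe
  fix u assume "u \<in> {min x w..max x w}"
  then have "u \<in> {min x y..max x y} \<or> u \<in> {min x z..max x z}"
    using assms(3,4) by (cases "x \<le> w") auto
  then show "P u" using assms(1,2) unfolding run_of_def by blast
qed

lemma run_of_less: "y \<in> run_of P x \<Longrightarrow> x < b \<Longrightarrow> \<not> P b \<Longrightarrow> y < b"
  unfolding run_of_def by (force dest: bspec[of _ _ b])

lemma run_of_greater: "y \<in> run_of P x \<Longrightarrow> a < x \<Longrightarrow> \<not> P a \<Longrightarrow> a < y"
  unfolding run_of_def by (force dest: bspec[of _ _ a])

lemma run_reflect_eq:
  "y \<in> run_of P x \<Longrightarrow> run_reflect P y = Min (run_of P x) + Max (run_of P x) - y"
  unfolding run_reflect_def using run_of_eq by metis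

lemma run_reflect_interval:
  assumes "x \<in> {lo..hi}"
  shows "run_reflect (\<lambda>y. y \<in> {lo..hi}) x = lo + hi - x"
proof -
  have "run_of (\<lambda>y. y \<in> {lo..hi}) x = {lo..hi}"
    using assms by (auto simp: run_of_def)
  moreover have "Min {lo..hi} = lo" "Max {lo..hi} = hi"
    using assms by (auto intro: Min_eqI Max_eqI)
  ultimately show ?thesis by (simp add: run_reflect_def)
qed

context
  fixes P :: "nat \<Rightarrow> bool"
  assumes finite_P: "finite (Collect P)"
begin

lemma finite_run_of: "finite (run_of P x)"
  using finite_subset[OF run_of_subset finite_P] .

lemma run_reflect_mem_run_of:
  assumes "P x"
  shows "run_reflect P x \<in> run_of P x"
proof -
  let ?R = "run_of P x"
  have x: "x \<in> ?R" using assms by (rule self_mem_run_of)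
  then have "Min ?R \<in> ?R" "Max ?R \<in> ?R" "Min ?R \<le> x" "x \<le> Max ?R"
    using finite_run_of by (auto intro: Min_in Max_in)
  then show ?thesis
    using run_of_convex[of "Min ?R" P x "Max ?R" "run_reflect P x"] by (auto simp: run_reflect_def)
qed

lemma run_reflect_preserves: "P x \<Longrightarrow> P (run_reflect P x)"
  using run_reflect_mem_run_of run_of_subset by blast

lemma run_reflect_run_reflect:
  assumes "P x"
  shows "run_reflect P (run_reflect P x) = x"
proof -
  have "x \<in> run_of P x" using assms by (rule self_mem_run_of)
  then have "x \<le> Max (run_of P x)" using finite_run_of by simp
  then show ?thesis
    using run_reflect_eq[OF run_reflect_mem_run_of[OF assms]] by (simp add: run_reflect_def)
qed

lemma bij_betw_run_reflect: "bij_betw (run_reflect P) (Collect P) (Collect P)"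
  by (rule bij_betw_byWitness[where f' = "run_reflect P"])
    (auto simp: run_reflect_run_reflect run_reflect_preserves)

text \<open>The block is carried onto a block in reverse order; the additive form avoids truncated
  subtraction.\<close>
lemma run_reflect_block:
  assumes block: "\<forall>s\<in>{1..p}. P (x + s)" and s: "s \<in> {1..p}"
  shows "run_reflect P (x + s) + s = run_reflect P (x + p) + p"
proof -
  let ?R = "run_of P (x + p)"
  have "P z" if "z \<in> {x + 1..x + p}" for z
  proof -
    have "z - x \<in> {1..p}" "x + (z - x) = z" using that by auto
    then show ?thesis using block by metis
  qed
  then have "x + s \<in> ?R" using s by (auto simp: run_of_def min_absorb2 max_absorb1)
  moreover have "x + p \<in> ?R" using s block by (auto intro: self_mem_run_of)
  moreover have "x + p \<le> Max ?R" using finite_run_of calculation(2) by simp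
  ultimately show ?thesis using run_reflect_eq[of _ P "x + p"] s by simp
qed

end

section \<open>Matchings and the endhered twists\<close>

lemma matching_arc: "is_matching n M \<Longrightarrow> (a, b) \<in> M \<Longrightarrow> 1 \<le> a \<and> a < b \<and> b \<le> 2*n"
  unfolding is_matching_def by blast

lemma matching_touch_unique:
  assumes M: "is_matching n M" and "e \<in> M" "e' \<in> M"
    and "fst e = x \<or> snd e = x" "fst e' = x \<or> snd e' = x"
  shows "e = e'"
proof -
  obtain a b where "e = (a, b)" by force
  then have "x \<in> {1..2*n}" using matching_arc[OF M, of a b] assms(2,4) by auto
  then show ?thesis using M assms(2-5) unfolding is_matching_def by blast
qed

lemma is_matching_iff:
  "is_matching n M \<longleftrightarrow>
     (\<forall>(a, b)\<in>M. 1 \<le> a \<and> a < b \<and> b \<le> 2*n) \<and> inj_on fst M \<and> inj_on snd M \<and>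
     fst ` M \<inter> snd ` M = {} \<and> {1..2*n} \<subseteq> fst ` M \<union> snd ` M"
  (is "_ \<longleftrightarrow> ?arcs \<and> ?inj_fst \<and> ?inj_snd \<and> ?disjoint \<and> ?cover")
proof
  assume M: "is_matching n M"
  note touch = matching_touch_unique[OF M]
  have ?arcs using M by (simp add: is_matching_def)
  moreover have ?inj_fst ?inj_snd using touch by (metis inj_onI)+
  moreover have "a \<noteq> b'" if "(a, b) \<in> M" "(a', b') \<in> M" for a b a' b'
  proof
    assume "a = b'"
    then have "(a, b) = (a', b')" using touch[OF that, of a] by simp
    then show False using matching_arc[OF M that(1)] \<open>a = b'\<close> by auto
  qed
  then have ?disjoint by fastforce
  moreover have ?cover
  proof
    fix x assume "x \<in> {1..2*n}"
    then obtain e where "e \<in> M" "fst e = x \<or> snd e = x"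
      using M unfolding is_matching_def by blast
    then show "x \<in> fst ` M \<union> snd ` M" by blast
  qed
  ultimately show "?arcs \<and> ?inj_fst \<and> ?inj_snd \<and> ?disjoint \<and> ?cover" by blast
next
  assume "?arcs \<and> ?inj_fst \<and> ?inj_snd \<and> ?disjoint \<and> ?cover"
  then have arcs: ?arcs and inj: ?inj_fst ?inj_snd and disjoint: ?disjoint and cover: ?cover
    by blast+
  have touch: "e = e'"
    if "e \<in> M" "e' \<in> M" "fst e = x \<or> snd e = x" "fst e' = x \<or> snd e' = x" for e e' x
    using inj disjoint that by (blast dest: inj_onD)
  show "is_matching n M"
    unfolding is_matching_def
  proof (intro conjI)
    show ?arcs by (rule arcs)
    show "\<forall>x\<in>{1..2*n}. \<exists>!e\<in>M. fst e = x \<or> snd e = x"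
    proof
      fix x assume "x \<in> {1..2*n}"
      then have "x \<in> fst ` M \<union> snd ` M" using cover by blast
      then obtain e where "e \<in> M" "fst e = x \<or> snd e = x" by blast
      then show "\<exists>!e\<in>M. fst e = x \<or> snd e = x" using touch by blast
    qed
  qed
qed

lemma finite_matching:
  assumes "is_matching n M"
  shows "finite M"
proof (rule finite_subset)
  show "M \<subseteq> {1..2*n} \<times> {1..2*n}" using matching_arc[OF assms] by fastforce
qed simp

lemma is_start_iff: "is_start M x \<longleftrightarrow> x \<in> fst ` M"
  by (force simp: is_start_def)

lemma is_end_iff: "is_end M x \<longleftrightarrow> x \<in> snd ` M"
  by (force simp: is_end_def)

lemma Collect_is_start: "Collect (is_start M) = fst ` M"
  using is_start_iff by blast

lemma Collect_is_end: "Collect (is_end M) = snd ` M"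
  using is_end_iff by blast

lemma fst_image_twist:
  assumes "bij_betw r (fst ` M) (fst ` M)"
  shows "fst ` (\<lambda>(a, b). (r a, s b)) ` M = fst ` M"
proof -
  have "fst ` (\<lambda>(a, b). (r a, s b)) ` M = r ` fst ` M"
    by (simp add: image_image case_prod_beta')
  also have "\<dots> = fst ` M" using assms by (rule bij_betw_imp_surj_on)
  finally show ?thesis .
qed

lemma snd_image_twist:
  assumes "bij_betw s (snd ` M) (snd ` M)"
  shows "snd ` (\<lambda>(a, b). (r a, s b)) ` M = snd ` M"
proof -
  have "snd ` (\<lambda>(a, b). (r a, s b)) ` M = s ` snd ` M"
    by (simp add: image_image case_prod_beta')
  also have "\<dots> = snd ` M" using assms by (rule bij_betw_imp_surj_on)
  finally show ?thesis .
qed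

lemma is_matching_twist:
  assumes M: "is_matching n M"
    and r: "bij_betw r (fst ` M) (fst ` M)" and s: "bij_betw s (snd ` M) (snd ` M)"
    and forward: "\<And>a b. (a, b) \<in> M \<Longrightarrow> r a < s b"
  shows "is_matching n ((\<lambda>(a, b). (r a, s b)) ` M)"
proof -
  let ?N = "(\<lambda>(a, b). (r a, s b)) ` M"
  have M': "\<forall>(a, b)\<in>M. 1 \<le> a \<and> a < b \<and> b \<le> 2*n" "inj_on fst M" "inj_on snd M"
    "fst ` M \<inter> snd ` M = {}" "{1..2*n} \<subseteq> fst ` M \<union> snd ` M"
    using M by (simp_all add: is_matching_iff)
  have "\<forall>(a, b)\<in>?N. 1 \<le> a \<and> a < b \<and> b \<le> 2*n"
  proof clarify
    fix a b assume ab: "(a, b) \<in> M"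
    have "a \<in> fst ` M" "b \<in> snd ` M" using ab by force+
    then have "r a \<in> fst ` M" "s b \<in> snd ` M"
      by (simp_all add: bij_betw_apply[OF r] bij_betw_apply[OF s])
    then show "1 \<le> r a \<and> r a < s b \<and> s b \<le> 2*n" using M'(1) forward[OF ab] by fastforce
  qed
  moreover have "inj_on fst ?N"
  proof (rule inj_on_imageI)
    have "fst \<circ> (\<lambda>(a, b). (r a, s b)) = r \<circ> fst" by (auto simp: fun_eq_iff)
    then show "inj_on (fst \<circ> (\<lambda>(a, b). (r a, s b))) M"
      using comp_inj_on[OF M'(2) bij_betw_imp_inj_on[OF r]] by simp
  qed
  moreover have "inj_on snd ?N"
  proof (rule inj_on_imageI)
    have "snd \<circ> (\<lambda>(a, b). (r a, s b)) = s \<circ> snd" by (auto simp: fun_eq_iff)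
    then show "inj_on (snd \<circ> (\<lambda>(a, b). (r a, s b))) M"
      using comp_inj_on[OF M'(3) bij_betw_imp_inj_on[OF s]] by simp
  qed
  moreover have "fst ` ?N \<inter> snd ` ?N = {}" "{1..2*n} \<subseteq> fst ` ?N \<union> snd ` ?N"
    using M'(4,5) by (simp_all only: fst_image_twist[OF r] snd_image_twist[OF s])
  ultimately show ?thesis
    unfolding is_matching_iff by (intro conjI)
qed

lemma finite_starts: "is_matching n M \<Longrightarrow> finite (Collect (is_start M))"
  by (simp add: Collect_is_start finite_matching)

lemma finite_ends: "is_matching n M \<Longrightarrow> finite (Collect (is_end M))"
  by (simp add: Collect_is_end finite_matching)

lemma bij_betw_reflect_starts:
  "is_matching n M \<Longrightarrow> bij_betw (run_reflect (is_start M)) (fst ` M) (fst ` M)"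
  using bij_betw_run_reflect[OF finite_starts] by (simp add: Collect_is_start)

lemma bij_betw_reflect_ends:
  "is_matching n M \<Longrightarrow> bij_betw (run_reflect (is_end M)) (snd ` M) (snd ` M)"
  using bij_betw_run_reflect[OF finite_ends] by (simp add: Collect_is_end)

lemma start_not_end: "is_matching n M \<Longrightarrow> is_start M x \<Longrightarrow> \<not> is_end M x"
  by (auto simp: is_start_iff is_end_iff is_matching_iff)

lemma is_start_pos: "is_matching n M \<Longrightarrow> is_start M x \<Longrightarrow> 1 \<le> x"
  unfolding is_start_def using matching_arc by fastforce

lemma is_end_pos: "is_matching n M \<Longrightarrow> is_end M x \<Longrightarrow> 1 \<le> x"
  unfolding is_end_def using matching_arc by fastforce

lemma is_matching_letw:
  assumes M: "is_matching n M"
  shows "is_matching n (letw M)"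
proof -
  let ?r = "run_reflect (is_start M)"
  have "bij_betw ?r (fst ` M) (fst ` M)" using M by (rule bij_betw_reflect_starts)
  moreover have "?r a < b" if ab: "(a, b) \<in> M" for a b
  proof (rule run_of_less)
    show "?r a \<in> run_of (is_start M) a"
      using ab by (intro run_reflect_mem_run_of[OF finite_starts[OF M]]) (auto simp: is_start_def)
    show "a < b" using matching_arc[OF M ab] by simp
    show "\<not> is_start M b" using start_not_end[OF M, of b] ab by (auto simp: is_end_def)
  qed
  ultimately show ?thesis
    using is_matching_twist[OF M, of ?r id] by (simp add: letw_def)
qed

lemma is_matching_retw:
  assumes M: "is_matching n M"
  shows "is_matching n (retw M)"
proof -
  let ?r = "run_reflect (is_end M)"
  have "bij_betw ?r (snd ` M) (snd ` M)" using M by (rule bij_betw_reflect_ends)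
  moreover have "a < ?r b" if ab: "(a, b) \<in> M" for a b
  proof (rule run_of_greater)
    show "?r b \<in> run_of (is_end M) b"
      using ab by (intro run_reflect_mem_run_of[OF finite_ends[OF M]]) (auto simp: is_end_def)
    show "a < b" using matching_arc[OF M ab] by simp
    show "\<not> is_end M a" using start_not_end[OF M, of a] ab by (auto simp: is_start_def)
  qed
  ultimately show ?thesis
    using is_matching_twist[OF M, of id ?r] by (simp add: retw_def)
qed

lemma is_start_letw:
  assumes M: "is_matching n M"
  shows "is_start (letw M) = is_start M"
proof -
  have "fst ` letw M = fst ` M"
    using fst_image_twist[OF bij_betw_reflect_starts[OF M], of id] by (simp add: letw_def)
  then show ?thesis by (simp add: fun_eq_iff is_start_iff)
qed

lemma is_end_retw:
  assumes M: "is_matching n M"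
  shows "is_end (retw M) = is_end M"
proof -
  have "snd ` retw M = snd ` M"
    using snd_image_twist[OF bij_betw_reflect_ends[OF M], of id] by (simp add: retw_def)
  then show ?thesis by (simp add: fun_eq_iff is_end_iff)
qed

lemma letw_letw:
  assumes M: "is_matching n M"
  shows "letw (letw M) = M"
proof -
  let ?r = "run_reflect (is_start M)"
  have "letw (letw M) = (\<lambda>(a, b). (?r a, b)) ` letw M"
    by (simp add: letw_def[of "letw M"] is_start_letw[OF M])
  also have "\<dots> = (\<lambda>(a, b). (?r (?r a), b)) ` M"
    by (simp add: letw_def image_image case_prod_beta')
  also have "\<dots> = M"
    using run_reflect_run_reflect[OF finite_starts[OF M]] by (force simp: is_start_def)
  finally show ?thesis .
qed

lemma retw_retw:
  assumes M: "is_matching n M"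
  shows "retw (retw M) = M"
proof -
  let ?r = "run_reflect (is_end M)"
  have "retw (retw M) = (\<lambda>(a, b). (a, ?r b)) ` retw M"
    by (simp add: retw_def[of "retw M"] is_end_retw[OF M])
  also have "\<dots> = (\<lambda>(a, b). (a, ?r (?r b))) ` M"
    by (simp add: retw_def image_image case_prod_beta')
  also have "\<dots> = M"
    using run_reflect_run_reflect[OF finite_ends[OF M]] by (force simp: is_end_def)
  finally show ?thesis .
qed

section \<open>Occurrences of endhered patterns\<close>

text \<open>The arcs of an occurrence, written with \<open>\<sigma>\<close> instead of its inverse and without the
  condition \<open>i + p \<le> j\<close>, which is automatic in matchings (lemma \<open>occurs_at_imp_le\<close>).\<close>
definition occurs_at :: "nat \<Rightarrow> (nat \<Rightarrow> nat) \<Rightarrow> (nat \<times> nat) set \<Rightarrow> nat \<Rightarrow> nat \<Rightarrow> bool" where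
  "occurs_at p \<sigma> M i j \<longleftrightarrow> (\<forall>t\<in>{1..p}. (i + \<sigma> t, j + t) \<in> M)"

lemma occurs_at_starts:
  assumes "occurs_at p \<sigma> M i j" and \<sigma>: "bij_betw \<sigma> {1..p} {1..p}" and "s \<in> {1..p}"
  shows "is_start M (i + s)"
proof -
  obtain t where "t \<in> {1..p}" "s = \<sigma> t"
    using \<open>s \<in> {1..p}\<close> bij_betw_imp_surj_on[OF \<sigma>] by (metis imageE)
  then show ?thesis using assms(1) by (auto simp: occurs_at_def is_start_def)
qed

lemma occurs_at_ends: "occurs_at p \<sigma> M i j \<Longrightarrow> s \<in> {1..p} \<Longrightarrow> is_end M (j + s)"
  by (force simp: occurs_at_def is_end_def)

lemma contains_at_iff_occurs_at:
  assumes \<sigma>: "bij_betw \<sigma> {1..p} {1..p}"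
  shows "contains_at p \<sigma> M i j \<longleftrightarrow> i + p \<le> j \<and> occurs_at p \<sigma> M i j"
proof -
  let ?Q = "\<lambda>s. (i + s, j + inv_into {1..p} \<sigma> s) \<in> M"
  have onto: "\<sigma> ` {1..p} = {1..p}" using \<sigma> by (rule bij_betw_imp_surj_on)
  have "(\<forall>s\<in>{1..p}. ?Q s) \<longleftrightarrow> (\<forall>t\<in>{1..p}. ?Q (\<sigma> t))"
  proof
    assume "\<forall>s\<in>{1..p}. ?Q s"
    then show "\<forall>t\<in>{1..p}. ?Q (\<sigma> t)" using bij_betw_apply[OF \<sigma>] by blast
  next
    assume all: "\<forall>t\<in>{1..p}. ?Q (\<sigma> t)"
    show "\<forall>s\<in>{1..p}. ?Q s"
    proof
      fix s assume "s \<in> {1..p}"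
      then obtain t where "t \<in> {1..p}" "s = \<sigma> t" using onto by (metis imageE)
      then show "?Q s" using all by blast
    qed
  qed
  also have "\<dots> \<longleftrightarrow> occurs_at p \<sigma> M i j"
    using bij_betw_inv_into_left[OF \<sigma>] by (simp add: occurs_at_def)
  finally show ?thesis by (simp add: contains_at_def)
qed

text \<open>Otherwise position \<open>j + 1\<close> would be both a starting and an ending point.\<close>
lemma occurs_at_imp_le:
  assumes M: "is_matching n M" and \<sigma>: "bij_betw \<sigma> {1..p} {1..p}" and "0 < p"
    and occ: "occurs_at p \<sigma> M i j"
  shows "i + p \<le> j"
proof (rule ccontr)
  assume gap: "\<not> i + p \<le> j"
  have onto: "\<sigma> ` {1..p} = {1..p}" using \<sigma> by (rule bij_betw_imp_surj_on)
  have "p \<in> \<sigma> ` {1..p}" using onto \<open>0 < p\<close> by simp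
  then obtain t0 where "t0 \<in> {1..p}" "\<sigma> t0 = p" by blast
  then have "(i + p, j + t0) \<in> M" using occ by (force simp: occurs_at_def)
  then have "i + p < j + t0" using matching_arc[OF M] by blast
  with \<open>t0 \<in> {1..p}\<close> gap have "j + 1 - i \<in> {1..p}" by auto
  then have "j + 1 - i \<in> \<sigma> ` {1..p}" using onto by simp
  then obtain t where "t \<in> {1..p}" "\<sigma> t = j + 1 - i" by (metis imageE)
  then have "is_start M (j + 1)"
    using occ \<open>i + p < j + t0\<close> \<open>t0 \<in> {1..p}\<close> by (force simp: occurs_at_def is_start_def)
  moreover have "is_end M (j + 1)"
    using occ \<open>0 < p\<close> by (force simp: occurs_at_def is_end_def)
  ultimately show False using start_not_end[OF M] by blast
qed

lemma occurrences_eq_card_occurs_at: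
  assumes M: "is_matching n M" and \<sigma>: "bij_betw \<sigma> {1..p} {1..p}" and "0 < p"
  shows "occurrences p \<sigma> M = card {(i, j). occurs_at p \<sigma> M i j}"
proof -
  have "{(i, j). contains_at p \<sigma> M i j} = {(i, j). occurs_at p \<sigma> M i j}"
    using occurs_at_imp_le[OF M \<sigma> \<open>0 < p\<close>] by (auto simp: contains_at_iff_occurs_at[OF \<sigma>])
  then show ?thesis by (simp add: occurrences_def)
qed

lemma finite_occurs_at:
  assumes M: "is_matching n M" and "0 < p"
  shows "finite {(i, j). occurs_at p \<sigma> M i j}"
proof -
  have "i \<le> 2*n \<and> j \<le> 2*n" if "occurs_at p \<sigma> M i j" for i j
  proof -
    have "1 \<in> {1..p}" using \<open>0 < p\<close> by simp
    then have "(i + \<sigma> 1, j + 1) \<in> M" using that unfolding occurs_at_def by blast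
    then show ?thesis using matching_arc[OF M] by fastforce
  qed
  then have "{(i, j). occurs_at p \<sigma> M i j} \<subseteq> {..2*n} \<times> {..2*n}" by auto
  then show ?thesis by (rule finite_subset) simp
qed

lemma occurs_at_letw:
  assumes M: "is_matching n M" and "0 < p" and \<sigma>: "bij_betw \<sigma> {1..p} {1..p}"
    and rel: "\<forall>t\<in>{1..p}. \<sigma> t + \<sigma>' t = Suc p" and occ: "occurs_at p \<sigma> M i j"
  shows "occurs_at p \<sigma>' (letw M) (run_reflect (is_start M) (i + p) - 1) j"
  unfolding occurs_at_def
proof
  let ?r = "run_reflect (is_start M)"
  have block: "\<forall>s\<in>{1..p}. is_start M (i + s)"
    using occurs_at_starts[OF occ \<sigma>] by blast
  have pos: "1 \<le> ?r (i + p)"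
    using block \<open>0 < p\<close> run_reflect_preserves[OF finite_starts[OF M]] is_start_pos[OF M] by simp
  fix t assume t: "t \<in> {1..p}"
  have "\<sigma> t \<in> {1..p}" "\<sigma> t + \<sigma>' t = Suc p" using t bij_betw_apply[OF \<sigma>] rel by auto
  then have "?r (i + \<sigma> t) = ?r (i + p) - 1 + \<sigma>' t"
    using run_reflect_block[OF finite_starts[OF M] block, of "\<sigma> t"] pos by linarith
  moreover have "(i + \<sigma> t, j + t) \<in> M" using occ t unfolding occurs_at_def by blast
  then have "(?r (i + \<sigma> t), j + t) \<in> letw M" unfolding letw_def by (rule rev_image_eqI) simp
  ultimately show "(?r (i + p) - 1 + \<sigma>' t, j + t) \<in> letw M" by simp
qed

lemma occurs_at_retw:
  assumes M: "is_matching n M" and "0 < p"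
    and rel: "\<forall>t\<in>{1..p}. \<sigma>' t = \<sigma> (Suc p - t)" and occ: "occurs_at p \<sigma> M i j"
  shows "occurs_at p \<sigma>' (retw M) i (run_reflect (is_end M) (j + p) - 1)"
  unfolding occurs_at_def
proof
  let ?r = "run_reflect (is_end M)"
  have block: "\<forall>s\<in>{1..p}. is_end M (j + s)"
    using occurs_at_ends[OF occ] by blast
  have pos: "1 \<le> ?r (j + p)"
    using block \<open>0 < p\<close> run_reflect_preserves[OF finite_ends[OF M]] is_end_pos[OF M] by simp
  fix t assume t: "t \<in> {1..p}"
  let ?u = "Suc p - t"
  have u: "?u \<in> {1..p}" "?u + t = Suc p" using t by auto
  then have "?r (j + ?u) = ?r (j + p) - 1 + t"
    using run_reflect_block[OF finite_ends[OF M] block, of ?u] pos by linarith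
  moreover have "(i + \<sigma> ?u, j + ?u) \<in> M" using occ u(1) unfolding occurs_at_def by blast
  then have "(i + \<sigma> ?u, ?r (j + ?u)) \<in> retw M" unfolding retw_def by (rule rev_image_eqI) simp
  ultimately show "(i + \<sigma>' t, ?r (j + p) - 1 + t) \<in> retw M" using rel t by simp
qed

lemma occurrences_le_letw:
  assumes M: "is_matching n M" and "0 < p"
    and \<sigma>: "bij_betw \<sigma> {1..p} {1..p}" and \<sigma>': "bij_betw \<sigma>' {1..p} {1..p}"
    and rel: "\<forall>t\<in>{1..p}. \<sigma> t + \<sigma>' t = Suc p"
  shows "occurrences p \<sigma> M \<le> occurrences p \<sigma>' (letw M)"
proof -
  let ?r = "run_reflect (is_start M)"
  let ?h = "\<lambda>(i, j). (?r (i + p) - 1, j)"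
  have "inj_on ?h {(i, j). occurs_at p \<sigma> M i j}"
  proof (rule inj_onI)
    fix x y assume "x \<in> {(i, j). occurs_at p \<sigma> M i j}" "y \<in> {(i, j). occurs_at p \<sigma> M i j}"
      and eq: "?h x = ?h y"
    then obtain i j i' j' where xy: "x = (i, j)" "y = (i', j')"
      and "occurs_at p \<sigma> M i j" "occurs_at p \<sigma> M i' j'" by blast
    then have start: "is_start M (i + p)" "is_start M (i' + p)"
      using \<open>0 < p\<close> occurs_at_starts[OF _ \<sigma>] by auto
    then have "1 \<le> ?r (i + p)" "1 \<le> ?r (i' + p)"
      using run_reflect_preserves[OF finite_starts[OF M]] is_start_pos[OF M] by blast+
    with eq xy have "?r (i + p) = ?r (i' + p)" "j = j'" by auto
    then show "x = y"
      using xy start bij_betw_imp_inj_on[OF bij_betw_run_reflect[OF finite_starts[OF M]]]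
      by (auto dest: inj_onD)
  qed
  moreover have "?h ` {(i, j). occurs_at p \<sigma> M i j} \<subseteq> {(i, j). occurs_at p \<sigma>' (letw M) i j}"
    using occurs_at_letw[OF M \<open>0 < p\<close> \<sigma> rel] by auto
  ultimately show ?thesis
    using card_inj_on_le[OF _ _ finite_occurs_at[OF is_matching_letw[OF M] \<open>0 < p\<close>]]
    by (simp add: occurrences_eq_card_occurs_at[OF M \<sigma> \<open>0 < p\<close>]
        occurrences_eq_card_occurs_at[OF is_matching_letw[OF M] \<sigma>' \<open>0 < p\<close>])
qed

lemma occurrences_le_retw:
  assumes M: "is_matching n M" and "0 < p"
    and \<sigma>: "bij_betw \<sigma> {1..p} {1..p}" and \<sigma>': "bij_betw \<sigma>' {1..p} {1..p}"
    and rel: "\<forall>t\<in>{1..p}. \<sigma>' t = \<sigma> (Suc p - t)"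
  shows "occurrences p \<sigma> M \<le> occurrences p \<sigma>' (retw M)"
proof -
  let ?r = "run_reflect (is_end M)"
  let ?h = "\<lambda>(i, j). (i, ?r (j + p) - 1)"
  have "inj_on ?h {(i, j). occurs_at p \<sigma> M i j}"
  proof (rule inj_onI)
    fix x y assume "x \<in> {(i, j). occurs_at p \<sigma> M i j}" "y \<in> {(i, j). occurs_at p \<sigma> M i j}"
      and eq: "?h x = ?h y"
    then obtain i j i' j' where xy: "x = (i, j)" "y = (i', j')"
      and "occurs_at p \<sigma> M i j" "occurs_at p \<sigma> M i' j'" by blast
    then have end': "is_end M (j + p)" "is_end M (j' + p)"
      using \<open>0 < p\<close> occurs_at_ends by auto
    then have "1 \<le> ?r (j + p)" "1 \<le> ?r (j' + p)"
      using run_reflect_preserves[OF finite_ends[OF M]] is_end_pos[OF M] by blast+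
    with eq xy have "?r (j + p) = ?r (j' + p)" "i = i'" by auto
    then show "x = y"
      using xy end' bij_betw_imp_inj_on[OF bij_betw_run_reflect[OF finite_ends[OF M]]]
      by (auto dest: inj_onD)
  qed
  moreover have "?h ` {(i, j). occurs_at p \<sigma> M i j} \<subseteq> {(i, j). occurs_at p \<sigma>' (retw M) i j}"
    using occurs_at_retw[OF M \<open>0 < p\<close> rel] by auto
  ultimately show ?thesis
    using card_inj_on_le[OF _ _ finite_occurs_at[OF is_matching_retw[OF M] \<open>0 < p\<close>]]
    by (simp add: occurrences_eq_card_occurs_at[OF M \<sigma> \<open>0 < p\<close>]
        occurrences_eq_card_occurs_at[OF is_matching_retw[OF M] \<sigma>' \<open>0 < p\<close>])
qed

lemma occurrences_letw:
  assumes M: "is_matching n M" and "0 < p"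
    and \<sigma>: "bij_betw \<sigma> {1..p} {1..p}" and \<sigma>': "bij_betw \<sigma>' {1..p} {1..p}"
    and rel: "\<forall>t\<in>{1..p}. \<sigma> t + \<sigma>' t = Suc p"
  shows "occurrences p \<sigma>' (letw M) = occurrences p \<sigma> M"
proof (rule antisym)
  have "occurrences p \<sigma>' (letw M) \<le> occurrences p \<sigma> (letw (letw M))"
    using occurrences_le_letw[OF is_matching_letw[OF M] \<open>0 < p\<close> \<sigma>' \<sigma>] rel by (simp add: add.commute)
  then show "occurrences p \<sigma>' (letw M) \<le> occurrences p \<sigma> M" by (simp add: letw_letw[OF M])
  show "occurrences p \<sigma> M \<le> occurrences p \<sigma>' (letw M)"
    by (rule occurrences_le_letw[OF M \<open>0 < p\<close> \<sigma> \<sigma>' rel])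
qed

lemma reverse_index_sym:
  assumes "\<forall>t\<in>{1..p}. f t = g (Suc p - t)"
  shows "\<forall>t\<in>{1..p}. g t = f (Suc p - t)"
proof
  fix t :: nat assume "t \<in> {1..p}"
  then have "Suc p - t \<in> {1..p}" "Suc p - (Suc p - t) = t" by auto
  then show "g t = f (Suc p - t)" using assms by metis
qed

lemma occurrences_retw:
  assumes M: "is_matching n M" and "0 < p"
    and \<sigma>: "bij_betw \<sigma> {1..p} {1..p}" and \<sigma>': "bij_betw \<sigma>' {1..p} {1..p}"
    and rel: "\<forall>t\<in>{1..p}. \<sigma>' t = \<sigma> (Suc p - t)"
  shows "occurrences p \<sigma>' (retw M) = occurrences p \<sigma> M"
proof (rule antisym)
  have "occurrences p \<sigma>' (retw M) \<le> occurrences p \<sigma> (retw (retw M))"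
    using occurrences_le_retw[OF is_matching_retw[OF M] \<open>0 < p\<close> \<sigma>' \<sigma> reverse_index_sym[OF rel]] .
  then show "occurrences p \<sigma>' (retw M) \<le> occurrences p \<sigma> M" by (simp add: retw_retw[OF M])
  show "occurrences p \<sigma> M \<le> occurrences p \<sigma>' (retw M)"
    by (rule occurrences_le_retw[OF M \<open>0 < p\<close> \<sigma> \<sigma>' rel])
qed

definition swaps_occurrences ::
    "nat \<Rightarrow> (nat \<Rightarrow> nat) \<Rightarrow> (nat \<Rightarrow> nat) \<Rightarrow> ((nat \<times> nat) set \<Rightarrow> (nat \<times> nat) set) \<Rightarrow> bool" where
  "swaps_occurrences p \<pi> \<tau> h \<longleftrightarrow> (\<forall>n M. is_matching n M \<longrightarrow>
     is_matching n (h M) \<and> h (h M) = M \<and>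
     occurrences p \<pi> (h M) = occurrences p \<tau> M \<and> occurrences p \<tau> (h M) = occurrences p \<pi> M)"

lemma a_nkm_swap:
  assumes "swaps_occurrences p \<pi> \<tau> h"
  shows "a_nkm p \<pi> \<tau> n k m = a_nkm p \<tau> \<pi> n k m"
proof -
  have "bij_betw h {M. is_matching n M \<and> occurrences p \<tau> M = k \<and> occurrences p \<pi> M = m}
                   {M. is_matching n M \<and> occurrences p \<pi> M = k \<and> occurrences p \<tau> M = m}"
    by (rule bij_betw_byWitness[where f' = h]) (use assms in \<open>auto simp: swaps_occurrences_def\<close>)
  then show ?thesis by (simp add: a_nkm_def bij_betw_same_card)
qed

lemma a_nk_swap:
  assumes "swaps_occurrences p \<pi> \<tau> h"
  shows "a_nk p \<pi> n k = a_nk p \<tau> n k"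
proof -
  have "bij_betw h {M. is_matching n M \<and> occurrences p \<tau> M = k}
                   {M. is_matching n M \<and> occurrences p \<pi> M = k}"
    by (rule bij_betw_byWitness[where f' = h]) (use assms in \<open>auto simp: swaps_occurrences_def\<close>)
  then show ?thesis by (simp add: a_nk_def bij_betw_same_card)
qed

text \<open>For \<open>p = 0\<close> the occurrence sets do not depend on the pattern (they are infinite, so all
  counts are 0).\<close>
lemma swaps_occurrences_size_0: "swaps_occurrences 0 \<pi> \<tau> id"
  by (simp add: swaps_occurrences_def occurrences_def contains_at_def)

lemma swaps_occurrences_letw:
  assumes "0 < p" and \<pi>: "bij_betw \<pi> {1..p} {1..p}" and \<tau>: "bij_betw \<tau> {1..p} {1..p}"
    and rel: "\<forall>t\<in>{1..p}. \<pi> t + \<tau> t = Suc p"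
  shows "swaps_occurrences p \<pi> \<tau> letw"
  unfolding swaps_occurrences_def
proof (intro allI impI conjI)
  fix n M assume M: "is_matching n M"
  show "is_matching n (letw M)" using M by (rule is_matching_letw)
  show "letw (letw M) = M" using M by (rule letw_letw)
  show "occurrences p \<pi> (letw M) = occurrences p \<tau> M"
    using occurrences_letw[OF M \<open>0 < p\<close> \<tau> \<pi>] rel by (simp add: add.commute)
  show "occurrences p \<tau> (letw M) = occurrences p \<pi> M"
    using occurrences_letw[OF M \<open>0 < p\<close> \<pi> \<tau> rel] .
qed

lemma swaps_occurrences_retw:
  assumes "0 < p" and \<pi>: "bij_betw \<pi> {1..p} {1..p}" and \<tau>: "bij_betw \<tau> {1..p} {1..p}"
    and rel: "\<forall>t\<in>{1..p}. \<pi> t = \<tau> (Suc p - t)"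
  shows "swaps_occurrences p \<pi> \<tau> retw"
  unfolding swaps_occurrences_def
proof (intro allI impI conjI)
  fix n M assume M: "is_matching n M"
  show "is_matching n (retw M)" using M by (rule is_matching_retw)
  show "retw (retw M) = M" using M by (rule retw_retw)
  show "occurrences p \<pi> (retw M) = occurrences p \<tau> M"
    using occurrences_retw[OF M \<open>0 < p\<close> \<tau> \<pi> rel] .
  show "occurrences p \<tau> (retw M) = occurrences p \<pi> M"
    using occurrences_retw[OF M \<open>0 < p\<close> \<pi> \<tau> reverse_index_sym[OF rel]] .
qed

section \<open>Endhered patterns under the twists\<close>

lemma pattern_matching_eq_image: "pattern_matching p \<pi> = (\<lambda>t. (\<pi> t, p + t)) ` {1..p}"
  by (auto simp: pattern_matching_def)

lemma pattern_matching_eqD: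
  assumes "pattern_matching p \<pi> = pattern_matching p \<sigma>" and "t \<in> {1..p}"
  shows "\<pi> t = \<sigma> t"
proof -
  have "(\<pi> t, p + t) \<in> pattern_matching p \<pi>" using assms(2) by (simp add: pattern_matching_eq_image)
  then show ?thesis using assms(1) by (auto simp: pattern_matching_eq_image)
qed

lemma letw_pattern_matching:
  assumes \<tau>: "bij_betw \<tau> {1..p} {1..p}"
  shows "letw (pattern_matching p \<tau>) = pattern_matching p (\<lambda>t. Suc p - \<tau> t)"
proof -
  have "is_start (pattern_matching p \<tau>) = (\<lambda>x. x \<in> {1..p})"
    using bij_betw_imp_surj_on[OF \<tau>]
    by (auto simp: fun_eq_iff is_start_iff pattern_matching_eq_image image_image)
  then have "letw (pattern_matching p \<tau>) =
      (\<lambda>t. (run_reflect (\<lambda>x. x \<in> {1..p}) (\<tau> t), p + t)) ` {1..p}"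
    by (simp add: letw_def pattern_matching_eq_image image_image)
  also have "\<dots> = pattern_matching p (\<lambda>t. Suc p - \<tau> t)"
    unfolding pattern_matching_eq_image
  proof (rule image_cong[OF refl])
    fix t assume "t \<in> {1..p}"
    then have "\<tau> t \<in> {1..p}" by (rule bij_betw_apply[OF \<tau>])
    then show "(run_reflect (\<lambda>x. x \<in> {1..p}) (\<tau> t), p + t) = (Suc p - \<tau> t, p + t)"
      using run_reflect_interval by simp
  qed
  finally show ?thesis .
qed

lemma image_reverse_index: "(\<lambda>t. Suc p - t) ` {1..p} = {1..p}"
proof
  show "(\<lambda>t. Suc p - t) ` {1..p} \<subseteq> {1..p}" by auto
  show "{1..p} \<subseteq> (\<lambda>t. Suc p - t) ` {1..p}"
  proof
    fix u assume "u \<in> {1..p}"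
    then have "u = Suc p - (Suc p - u)" "Suc p - u \<in> {1..p}" by auto
    then show "u \<in> (\<lambda>t. Suc p - t) ` {1..p}" by blast
  qed
qed

lemma retw_pattern_matching: "retw (pattern_matching p \<tau>) = pattern_matching p (\<lambda>t. \<tau> (Suc p - t))"
proof -
  have "is_end (pattern_matching p \<tau>) = (\<lambda>x. x \<in> {p + 1..p + p})"
    by (auto simp: fun_eq_iff is_end_iff pattern_matching_eq_image image_image)
  then have "retw (pattern_matching p \<tau>) =
      (\<lambda>t. (\<tau> t, run_reflect (\<lambda>x. x \<in> {p + 1..p + p}) (p + t))) ` {1..p}"
    by (simp add: retw_def pattern_matching_eq_image image_image)
  also have "\<dots> = (\<lambda>t. (\<tau> (Suc p - (Suc p - t)), p + (Suc p - t))) ` {1..p}"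
  proof (rule image_cong[OF refl])
    fix t assume "t \<in> {1..p}"
    then have "p + t \<in> {p + 1..p + p}" "Suc p - (Suc p - t) = t" by auto
    then show "(\<tau> t, run_reflect (\<lambda>x. x \<in> {p + 1..p + p}) (p + t)) =
        (\<tau> (Suc p - (Suc p - t)), p + (Suc p - t))"
      using run_reflect_interval by simp
  qed
  also have "\<dots> = (\<lambda>u. (\<tau> (Suc p - u), p + u)) ` (\<lambda>t. Suc p - t) ` {1..p}"
    by (simp add: image_image)
  also have "\<dots> = pattern_matching p (\<lambda>t. \<tau> (Suc p - t))"
    by (simp only: image_reverse_index pattern_matching_eq_image)
  finally show ?thesis .
qed

lemma pattern_matching_eq_letwD:
  assumes \<tau>: "bij_betw \<tau> {1..p} {1..p}" and eq: "pattern_matching p \<pi> = letw (pattern_matching p \<tau>)"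
  shows "\<forall>t\<in>{1..p}. \<pi> t + \<tau> t = Suc p"
proof
  fix t assume t: "t \<in> {1..p}"
  have "\<pi> t = Suc p - \<tau> t"
    using pattern_matching_eqD[OF eq[unfolded letw_pattern_matching[OF \<tau>]] t] .
  moreover have "\<tau> t \<in> {1..p}" using t by (rule bij_betw_apply[OF \<tau>])
  ultimately show "\<pi> t + \<tau> t = Suc p" by simp
qed

lemma pattern_matching_eq_retwD:
  assumes "pattern_matching p \<pi> = retw (pattern_matching p \<tau>)"
  shows "\<forall>t\<in>{1..p}. \<pi> t = \<tau> (Suc p - t)"
  using pattern_matching_eqD[OF assms[unfolded retw_pattern_matching]] by blast

theorem lemma1:
  fixes p :: nat and \<pi> \<tau> :: "nat \<Rightarrow> nat"
  assumes "bij_betw \<pi> {1..p} {1..p}" and "bij_betw \<tau> {1..p} {1..p}"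
    and "pattern_matching p \<pi> = letw (pattern_matching p \<tau>)
         \<or> pattern_matching p \<pi> = retw (pattern_matching p \<tau>)"
  shows "(\<forall>n k m. a_nkm p \<pi> \<tau> n k m = a_nkm p \<tau> \<pi> n k m)
       \<and> (\<forall>n k. a_nk p \<pi> n k = a_nk p \<tau> n k)"
proof -
  have "\<exists>h. swaps_occurrences p \<pi> \<tau> h"
  proof (cases "p = 0")
    case True
    then show ?thesis using swaps_occurrences_size_0 by blast
  next
    case False
    then have "0 < p" by simp
    from assms(3) show ?thesis
    proof
      assume "pattern_matching p \<pi> = letw (pattern_matching p \<tau>)"
      then have "swaps_occurrences p \<pi> \<tau> letw"
        by (rule swaps_occurrences_letw[OF \<open>0 < p\<close> assms(1,2) pattern_matching_eq_letwD[OF assms(2)]])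
      then show ?thesis by blast
    next
      assume "pattern_matching p \<pi> = retw (pattern_matching p \<tau>)"
      then have "swaps_occurrences p \<pi> \<tau> retw"
        by (rule swaps_occurrences_retw[OF \<open>0 < p\<close> assms(1,2) pattern_matching_eq_retwD])
      then show ?thesis by blast
    qed
  qed
  then show ?thesis using a_nkm_swap a_nk_swap by blast
qed

end
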